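(* Let $(T_0,\widetilde T_0)$ be a joint pair of closed abstract Friedrichs operators on a complex Hilbert space $\mathcal{H}$, with $T_1:=\widetilde T_0^*$, $\widetilde T_1:=T_0^*$, $\mathcal{W}_0:=\operatorname{dom}T_0=\operatorname{dom}\widetilde T_0$ and $\mathcal{W}:=\operatorname{dom}T_1=\operatorname{dom}\widetilde T_1$. Let $T_{\mathrm r}=T_1|_{\mathcal{V}}$, where $\mathcal{W}_0\subseteq\mathcal{V}\subseteq\mathcal{W}$, be a closed realisation of $T_0$ which is a bijection from $\mathcal{V}$ onto $\mathcal{H}$. Then $$\mathcal{W}=\mathcal{W}_0\dotplus T_{\mathrm r}^{-1}(\operatorname{ker}\widetilde T_1)\dotplus\operatorname{ker}T_1=\mathcal{W}_0\dotplus (T_{\mathrm r}^* )^{-1}(\operatorname{ker}T_1)\dotplus\operatorname{ker}\widetilde T_1 .$$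
   Context: $\mathcal{H}$ is a complex Hilbert space with inner product $\langle\cdot,\cdot\rangle$ and norm $\|\cdot\|$. A pair $(T,\widetilde T)$ of densely defined linear operators on $\mathcal{H}$ is a joint pair of abstract Friedrichs operators if: (T1) $T$ and $\widetilde T$ have a common dense domain $\mathcal{D}$ and $\langle T\varphi,\psi\rangle=\langle\varphi,\widetilde T\psi\rangle$ for all $\varphi,\psi\in\mathcal{D}$; (T2) there is $c>0$ with $\|(T+\widetilde T)\varphi\|\le c\|\varphi\|$ for all $\varphi\in\mathcal{D}$; (T3) there is $\mu_0>0$ with $\langle (T+\widetilde T)\varphi,\varphi\rangle\ge 2\mu_0\|\varphi\|^2$ for all $\varphi\in\mathcal{D}$. A joint pair of closed abstract Friedrichs operators is such a pair $(T_0,\widetilde T_0)$ in which both operators are closed. One has $T_0\subseteq T_1$, $\widetilde T_0\subseteq\widetilde T_1$ and $\operatorname{dom}T_1=\operatorname{dom}\widetilde T_1$. A realisation of $T_0$ is a restriction $T_1|_{\mathcal{V}}$ with $\mathcal{W}_0\subseteq\mathcal{V}\subseteq\mathcal{W}$. For a closed bijective realisation $T_{\mathrm r}$, its inverse is bounded on $\mathcal{H}$, and its adjoint $T_{\mathrm r}^*$ is a realisation of $\widetilde T_0$ (i.e. $\widetilde T_0\subseteq T_{\mathrm r}^*\subseteq\widetilde T_1$) which is also bijective onto $\mathcal{H}$. *)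

theory Defs
  imports "HOL-Analysis.Analysis"
begin

text \<open>A complex Hilbert space is modelled on a type 'a with its additive group
structure, a complex scalar multiplication sm and an inner product ip
(linear in the first argument, conjugate-linear in the second).\<close>

definition complex_hilbert_space ::
  "(complex \<Rightarrow> 'a::ab_group_add \<Rightarrow> 'a) \<Rightarrow> ('a \<Rightarrow> 'a \<Rightarrow> complex) \<Rightarrow> bool" where
  "complex_hilbert_space sm ip \<longleftrightarrow>
     (\<forall>a x y. sm a (x + y) = sm a x + sm a y) \<and>
     (\<forall>a b x. sm (a + b) x = sm a x + sm b x) \<and>
     (\<forall>a b x. sm (a * b) x = sm a (sm b x)) \<and>
     (\<forall>x. sm 1 x = x) \<and>
     (\<forall>x y z. ip (x + y) z = ip x z + ip y z) \<and>
     (\<forall>a x y. ip (sm a x) y = a * ip x y) \<and>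
     (\<forall>x y. ip y x = cnj (ip x y)) \<and>
     (\<forall>x. Re (ip x x) \<ge> 0) \<and>
     (\<forall>x. ip x x = 0 \<longrightarrow> x = 0) \<and>
     (\<forall>f::nat \<Rightarrow> 'a. (\<forall>e>0. \<exists>N. \<forall>m\<ge>N. \<forall>n\<ge>N. sqrt (Re (ip (f m - f n) (f m - f n))) < e)
        \<longrightarrow> (\<exists>l. (\<lambda>n. sqrt (Re (ip (f n - l) (f n - l)))) \<longlonglongrightarrow> 0))"

definition hnorm :: "('a::ab_group_add \<Rightarrow> 'a \<Rightarrow> complex) \<Rightarrow> 'a \<Rightarrow> real" where
  "hnorm ip x = sqrt (Re (ip x x))"

definition hconv :: "('a::ab_group_add \<Rightarrow> 'a \<Rightarrow> complex) \<Rightarrow> (nat \<Rightarrow> 'a) \<Rightarrow> 'a \<Rightarrow> bool" where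
  "hconv ip f l \<longleftrightarrow> (\<lambda>n. hnorm ip (f n - l)) \<longlonglongrightarrow> 0"

definition hdense :: "('a::ab_group_add \<Rightarrow> 'a \<Rightarrow> complex) \<Rightarrow> 'a set \<Rightarrow> bool" where
  "hdense ip D \<longleftrightarrow> (\<forall>x. \<exists>f. (\<forall>n. f n \<in> D) \<and> hconv ip f x)"

definition lin_subspace :: "(complex \<Rightarrow> 'a::ab_group_add \<Rightarrow> 'a) \<Rightarrow> 'a set \<Rightarrow> bool" where
  "lin_subspace sm D \<longleftrightarrow> 0 \<in> D \<and> (\<forall>x\<in>D. \<forall>y\<in>D. x + y \<in> D) \<and> (\<forall>a. \<forall>x\<in>D. sm a x \<in> D)"

definition lin_op :: "(complex \<Rightarrow> 'a::ab_group_add \<Rightarrow> 'a) \<Rightarrow> 'a set \<Rightarrow> ('a \<Rightarrow> 'a) \<Rightarrow> bool" where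
  "lin_op sm D T \<longleftrightarrow> lin_subspace sm D \<and>
     (\<forall>x\<in>D. \<forall>y\<in>D. T (x + y) = T x + T y) \<and> (\<forall>a. \<forall>x\<in>D. T (sm a x) = sm a (T x))"

definition closed_op :: "('a::ab_group_add \<Rightarrow> 'a \<Rightarrow> complex) \<Rightarrow> 'a set \<Rightarrow> ('a \<Rightarrow> 'a) \<Rightarrow> bool" where
  "closed_op ip D T \<longleftrightarrow> (\<forall>f x y. (\<forall>n. f n \<in> D) \<and> hconv ip f x \<and> hconv ip (\<lambda>n. T (f n)) y
      \<longrightarrow> x \<in> D \<and> T x = y)"

definition adj_dom :: "('a::ab_group_add \<Rightarrow> 'a \<Rightarrow> complex) \<Rightarrow> 'a set \<Rightarrow> ('a \<Rightarrow> 'a) \<Rightarrow> 'a set" where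
  "adj_dom ip D T = {y. \<exists>z. \<forall>x\<in>D. ip (T x) y = ip x z}"

definition adj_fun :: "('a::ab_group_add \<Rightarrow> 'a \<Rightarrow> complex) \<Rightarrow> 'a set \<Rightarrow> ('a \<Rightarrow> 'a) \<Rightarrow> 'a \<Rightarrow> 'a" where
  "adj_fun ip D T y = (THE z. \<forall>x\<in>D. ip (T x) y = ip x z)"

text \<open>Joint pair of abstract Friedrichs operators (T1)--(T3), on common domain D.\<close>
definition friedrichs_pair ::
  "(complex \<Rightarrow> 'a::ab_group_add \<Rightarrow> 'a) \<Rightarrow> ('a \<Rightarrow> 'a \<Rightarrow> complex) \<Rightarrow> 'a set \<Rightarrow> ('a \<Rightarrow> 'a) \<Rightarrow> ('a \<Rightarrow> 'a) \<Rightarrow> bool" where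
  "friedrichs_pair sm ip D T T' \<longleftrightarrow>
     lin_op sm D T \<and> lin_op sm D T' \<and> hdense ip D \<and>
     (\<forall>\<phi>\<in>D. \<forall>\<psi>\<in>D. ip (T \<phi>) \<psi> = ip \<phi> (T' \<psi>)) \<and>
     (\<exists>c>0. \<forall>\<phi>\<in>D. hnorm ip (T \<phi> + T' \<phi>) \<le> c * hnorm ip \<phi>) \<and>
     (\<exists>\<mu>\<^sub>0>0. \<forall>\<phi>\<in>D. Re (ip (T \<phi> + T' \<phi>) \<phi>) \<ge> 2 * \<mu>\<^sub>0 * (hnorm ip \<phi>)\<^sup>2)"

definition closed_friedrichs_pair ::
  "(complex \<Rightarrow> 'a::ab_group_add \<Rightarrow> 'a) \<Rightarrow> ('a \<Rightarrow> 'a \<Rightarrow> complex) \<Rightarrow> 'a set \<Rightarrow> ('a \<Rightarrow> 'a) \<Rightarrow> ('a \<Rightarrow> 'a) \<Rightarrow> bool" where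
  "closed_friedrichs_pair sm ip D T T' \<longleftrightarrow>
     friedrichs_pair sm ip D T T' \<and> closed_op ip D T \<and> closed_op ip D T'"

definition direct_sum3 :: "'a::ab_group_add set \<Rightarrow> 'a set \<Rightarrow> 'a set \<Rightarrow> 'a set \<Rightarrow> bool" where
  "direct_sum3 S A B C \<longleftrightarrow>
     S = {a + b + c | a b c. a \<in> A \<and> b \<in> B \<and> c \<in> C} \<and>
     (\<forall>a\<in>A. \<forall>b\<in>B. \<forall>c\<in>C. a + b + c = 0 \<longrightarrow> a = 0 \<and> b = 0 \<and> c = 0)"

end

(*
  By (T3) the closed operator T_0 is bounded below, so its range is closed and
  H = ran T_0 (+) ker T~_1 orthogonally, where T~_1 = T_0^*.  For u in W split
  T_1 u = T_0 a + k accordingly; then b := T_r^-1 k and c := u - a - b satisfy T_1 c = 0.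
  If a + b + c = 0, then T_0 a = - T_1 b lies both in ran T_0 and in ker T~_1, hence
  T_0 a = 0, so a = 0 and b = 0 by the injectivity of T_0 and T_r.

  The second decomposition is the same argument for the pair (T~_0, T_0) with T_r^*
  in place of T_r.  It needs dom T_0^* = dom T~_0^*, which follows from (T2) since the
  adjoint of the bounded symmetric operator T_0 + T~_0 is everywhere defined, and that
  T_r^* is a bijective restriction of T~_1: its surjectivity comes from the Riesz
  representation of f |-> <T_r^-1 f, h>, which is bounded by the closed graph theorem.
*)
theory Submission
  imports Defs
begin

locale hilbert_space =
  fixes sm :: "complex \<Rightarrow> 'a::ab_group_add \<Rightarrow> 'a" and ip :: "'a \<Rightarrow> 'a \<Rightarrow> complex"
  assumes complex_hilbert_space: "complex_hilbert_space sm ip"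
begin

abbreviation hn :: "'a \<Rightarrow> real" (\<open>\<parallel>_\<parallel>\<close>) where "\<parallel>x\<parallel> \<equiv> hnorm ip x"

lemmas hilbert_axioms = complex_hilbert_space[unfolded complex_hilbert_space_def]

lemma sm_add_right: "sm a (x + y) = sm a x + sm a y"
  using hilbert_axioms by (elim conjE) blast

lemma sm_add_left: "sm (a + b) x = sm a x + sm b x"
  using hilbert_axioms by (elim conjE) blast

lemma sm_mult: "sm (a * b) x = sm a (sm b x)"
  using hilbert_axioms by (elim conjE) blast

lemma sm_one [simp]: "sm 1 x = x"
  using hilbert_axioms by (elim conjE) blast

lemma ip_add_left: "ip (x + y) z = ip x z + ip y z"
  using hilbert_axioms by (elim conjE) blast

lemma ip_sm_left: "ip (sm a x) y = a * ip x y"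
  using hilbert_axioms by (elim conjE) blast

lemma ip_cnj: "ip y x = cnj (ip x y)"
  using hilbert_axioms by (elim conjE) blast

lemma ip_self_nonneg: "Re (ip x x) \<ge> 0"
  using hilbert_axioms by (elim conjE) blast

lemma ip_self_eq_0D: "ip x x = 0 \<Longrightarrow> x = 0"
  using hilbert_axioms by (elim conjE) blast

lemma hilbert_complete:
  assumes "\<forall>e>0. \<exists>K. \<forall>m\<ge>K. \<forall>n\<ge>K. \<parallel>f m - f n\<parallel> < e"
  shows "\<exists>l. hconv ip f l"
proof -
  have "\<forall>f. (\<forall>e>0. \<exists>K. \<forall>m\<ge>K. \<forall>n\<ge>K. \<parallel>f m - f n\<parallel> < e) \<longrightarrow> (\<exists>l. hconv ip f l)"
    using hilbert_axioms unfolding hconv_def hnorm_def by (elim conjE) assumption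
  then show ?thesis using assms by blast
qed

lemma sm_zero_left [simp]: "sm 0 x = 0"
  using sm_add_left[of 0 0 x] by simp

lemma sm_zero_right [simp]: "sm a 0 = 0"
  using sm_add_right[of a 0 0] by simp

lemma sm_minus_right: "sm a (- x) = - sm a x"
  using sm_add_right[of a x "- x"] by (simp add: eq_neg_iff_add_eq_0 add.commute)

lemma sm_minus_one: "sm (- 1) x = - x"
  using sm_add_left[of 1 "- 1" x] by (simp add: eq_neg_iff_add_eq_0 add.commute)

lemma sm_diff_right: "sm a (x - y) = sm a x - sm a y"
  using sm_add_right[of a x "- y"] sm_minus_right by simp

lemma ip_zero_left [simp]: "ip 0 y = 0"
  using ip_add_left[of 0 0 y] by simp

lemma ip_minus_left: "ip (- x) y = - ip x y"
  using ip_add_left[of x "- x" y] by (simp add: eq_neg_iff_add_eq_0 add.commute)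

lemma ip_diff_left: "ip (x - y) z = ip x z - ip y z"
  using ip_add_left[of x "- y" z] ip_minus_left by simp

lemma ip_add_right: "ip x (y + z) = ip x y + ip x z"
  by (metis ip_add_left ip_cnj complex_cnj_add)

lemma ip_sm_right: "ip x (sm a y) = cnj a * ip x y"
  by (metis ip_sm_left ip_cnj complex_cnj_mult)

lemma ip_zero_right [simp]: "ip x 0 = 0"
  using ip_add_right[of x 0 0] by simp

lemma ip_minus_right: "ip x (- y) = - ip x y"
  using ip_add_right[of x y "- y"] by (simp add: eq_neg_iff_add_eq_0 add.commute)

lemma ip_diff_right: "ip x (y - z) = ip x y - ip x z"
  using ip_add_right[of x y "- z"] ip_minus_right by simp

lemma ip_self_real: "ip x x = complex_of_real (Re (ip x x))"
  using ip_cnj[of x x] by (simp add: complex_eq_iff)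

lemma hnorm_nonneg [simp]: "\<parallel>x\<parallel> \<ge> 0"
  by (simp add: hnorm_def ip_self_nonneg)

lemma hnorm_square: "\<parallel>x\<parallel>\<^sup>2 = Re (ip x x)"
  by (simp add: hnorm_def ip_self_nonneg)

lemma hnorm_zero [simp]: "\<parallel>0\<parallel> = 0"
  by (simp add: hnorm_def)

lemma hnorm_eq_0_iff [simp]: "\<parallel>x\<parallel> = 0 \<longleftrightarrow> x = 0"
proof
  assume "\<parallel>x\<parallel> = 0"
  then have "ip x x = 0"
    using hnorm_square[of x] ip_self_real[of x] by simp
  then show "x = 0" by (rule ip_self_eq_0D)
qed simp

lemma hnorm_pos_iff: "\<parallel>x\<parallel> > 0 \<longleftrightarrow> x \<noteq> 0"
  using hnorm_nonneg[of x] hnorm_eq_0_iff[of x] by linarith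

lemma hnorm_add_square: "\<parallel>x + y\<parallel>\<^sup>2 = \<parallel>x\<parallel>\<^sup>2 + \<parallel>y\<parallel>\<^sup>2 + 2 * Re (ip x y)"
proof -
  have "ip (x + y) (x + y) = ip x x + ip y y + (ip x y + cnj (ip x y))"
    by (simp add: ip_add_left ip_add_right ip_cnj[of x y])
  then show ?thesis by (simp add: hnorm_square)
qed

lemma hnorm_diff_square: "\<parallel>x - y\<parallel>\<^sup>2 = \<parallel>x\<parallel>\<^sup>2 + \<parallel>y\<parallel>\<^sup>2 - 2 * Re (ip x y)"
proof -
  have "ip (x - y) (x - y) = ip x x + ip y y - (ip x y + cnj (ip x y))"
    by (simp add: ip_diff_left ip_diff_right ip_cnj[of x y])
  then show ?thesis by (simp add: hnorm_square)
qed

lemma hnorm_sm: "\<parallel>sm a x\<parallel> = cmod a * \<parallel>x\<parallel>"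
proof -
  have "ip (sm a x) (sm a x) = (a * cnj a) * ip x x"
    by (simp add: ip_sm_left ip_sm_right)
  also have "a * cnj a = complex_of_real ((cmod a)\<^sup>2)"
    by (rule complex_norm_square[symmetric])
  finally have "Re (ip (sm a x) (sm a x)) = (cmod a)\<^sup>2 * Re (ip x x)"
    by (metis Re_complex_of_real ip_self_real of_real_mult)
  then show ?thesis by (simp add: hnorm_def real_sqrt_mult)
qed

lemma hnorm_minus: "\<parallel>- x\<parallel> = \<parallel>x\<parallel>"
  using hnorm_sm[of "- 1" x] sm_minus_one by simp

lemma hnorm_minus_commute: "\<parallel>x - y\<parallel> = \<parallel>y - x\<parallel>"
  by (metis hnorm_minus minus_diff_eq)

lemma ip_Cauchy_Schwarz: "cmod (ip x y) \<le> \<parallel>x\<parallel> * \<parallel>y\<parallel>"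
proof (cases "y = 0")
  case False
  then have y: "\<parallel>y\<parallel> > 0" by (simp add: hnorm_pos_iff)
  define c where "c = ip x y / complex_of_real (\<parallel>y\<parallel>\<^sup>2)"
  have "ip x y * cnj (ip x y) = complex_of_real ((cmod (ip x y))\<^sup>2)"
    by (rule complex_norm_square[symmetric])
  then have c_ip: "cnj c * ip x y = complex_of_real ((cmod (ip x y))\<^sup>2 / \<parallel>y\<parallel>\<^sup>2)"
    by (simp add: c_def mult.commute)
  have c_norm: "(cmod c)\<^sup>2 = (cmod (ip x y))\<^sup>2 / (\<parallel>y\<parallel>\<^sup>2)\<^sup>2"
    by (simp add: c_def norm_divide power_divide norm_power)
  have "0 \<le> \<parallel>x - sm c y\<parallel>\<^sup>2" by simp
  also have "\<dots> = \<parallel>x\<parallel>\<^sup>2 + (cmod c)\<^sup>2 * \<parallel>y\<parallel>\<^sup>2 - 2 * Re (cnj c * ip x y)"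
    by (simp add: hnorm_diff_square hnorm_sm power_mult_distrib ip_sm_right)
  also have "\<dots> = \<parallel>x\<parallel>\<^sup>2 - (cmod (ip x y))\<^sup>2 / \<parallel>y\<parallel>\<^sup>2"
    using y unfolding c_ip c_norm by (simp add: field_simps power2_eq_square)
  finally have "(cmod (ip x y))\<^sup>2 \<le> (\<parallel>x\<parallel> * \<parallel>y\<parallel>)\<^sup>2"
    using y by (simp add: pos_divide_le_eq[OF zero_less_power] power_mult_distrib)
  then show ?thesis
    by (meson hnorm_nonneg mult_nonneg_nonneg power2_le_imp_le)
qed simp

lemma hnorm_triangle_ineq: "\<parallel>x + y\<parallel> \<le> \<parallel>x\<parallel> + \<parallel>y\<parallel>"
proof -
  have "Re (ip x y) \<le> \<parallel>x\<parallel> * \<parallel>y\<parallel>"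
    using ip_Cauchy_Schwarz[of x y] complex_Re_le_cmod order_trans by blast
  then have "\<parallel>x + y\<parallel>\<^sup>2 \<le> (\<parallel>x\<parallel> + \<parallel>y\<parallel>)\<^sup>2"
    by (simp add: hnorm_add_square power2_sum)
  then show ?thesis
    by (meson hnorm_nonneg add_nonneg_nonneg power2_le_imp_le)
qed

lemma hnorm_diff_triangle: "\<parallel>x - z\<parallel> \<le> \<parallel>x - y\<parallel> + \<parallel>y - z\<parallel>"
  using hnorm_triangle_ineq[of "x - y" "y - z"] by simp

lemma hnorm_diff_le: "\<parallel>x - y\<parallel> \<le> \<parallel>x\<parallel> + \<parallel>y\<parallel>"
  using hnorm_triangle_ineq[of x "- y"] hnorm_minus by simp

lemma hnorm_reverse_triangle: "\<bar>\<parallel>x\<parallel> - \<parallel>y\<parallel>\<bar> \<le> \<parallel>x - y\<parallel>"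
  using hnorm_diff_triangle[of x 0 y] hnorm_diff_triangle[of y 0 x] hnorm_minus_commute[of x y]
  by (simp add: hnorm_minus abs_le_iff)

lemma hnorm_parallelogram: "\<parallel>x + y\<parallel>\<^sup>2 + \<parallel>x - y\<parallel>\<^sup>2 = 2 * \<parallel>x\<parallel>\<^sup>2 + 2 * \<parallel>y\<parallel>\<^sup>2"
  by (simp add: hnorm_add_square hnorm_diff_square)

section \<open>Convergence, completeness and the Baire category theorem\<close>

lemma hconv_by_bound:
  assumes "\<And>n. \<parallel>f n - l\<parallel> \<le> a n" and "a \<longlonglongrightarrow> 0"
  shows "hconv ip f l"
  unfolding hconv_def by (rule Lim_null_comparison[OF _ assms(2)]) (use assms(1) in simp)

lemma hconv_const: "hconv ip (\<lambda>n. x) x"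
  by (simp add: hconv_def)

lemma hconv_add:
  assumes "hconv ip f x" and "hconv ip g y"
  shows "hconv ip (\<lambda>n. f n + g n) (x + y)"
proof (rule hconv_by_bound)
  show "\<parallel>f n + g n - (x + y)\<parallel> \<le> \<parallel>f n - x\<parallel> + \<parallel>g n - y\<parallel>" for n
    using hnorm_triangle_ineq[of "f n - x" "g n - y"] by (simp add: algebra_simps)
  show "(\<lambda>n. \<parallel>f n - x\<parallel> + \<parallel>g n - y\<parallel>) \<longlonglongrightarrow> 0"
    using assms tendsto_add[of _ 0 _ _ 0] unfolding hconv_def by force
qed

lemma hconv_diff:
  assumes "hconv ip f x" and "hconv ip g y"
  shows "hconv ip (\<lambda>n. f n - g n) (x - y)"
proof -
  have "hconv ip (\<lambda>n. - g n) (- y)"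
    using assms(2) hnorm_minus[of "g n - y" for n] by (simp add: hconv_def algebra_simps)
  then show ?thesis using hconv_add[OF assms(1)] by fastforce
qed

lemma hconv_hnorm:
  assumes "hconv ip f x"
  shows "(\<lambda>n. \<parallel>f n\<parallel>) \<longlonglongrightarrow> \<parallel>x\<parallel>"
proof -
  have "(\<lambda>n. \<parallel>f n\<parallel> - \<parallel>x\<parallel>) \<longlonglongrightarrow> 0"
    by (rule Lim_null_comparison[of _ "\<lambda>n. \<parallel>f n - x\<parallel>"])
       (use assms hnorm_reverse_triangle in \<open>auto simp: hconv_def\<close>)
  then show ?thesis by (simp add: LIM_zero_cancel)
qed

lemma hconv_ip_left:
  assumes "hconv ip f x"
  shows "(\<lambda>n. ip (f n) y) \<longlonglongrightarrow> ip x y"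
proof -
  have "(\<lambda>n. ip (f n) y - ip x y) \<longlonglongrightarrow> 0"
  proof (rule Lim_null_comparison[of _ "\<lambda>n. \<parallel>f n - x\<parallel> * \<parallel>y\<parallel>"])
    show "\<forall>\<^sub>F n in sequentially. norm (ip (f n) y - ip x y) \<le> \<parallel>f n - x\<parallel> * \<parallel>y\<parallel>"
      using ip_Cauchy_Schwarz by (simp add: ip_diff_left[symmetric])
    show "(\<lambda>n. \<parallel>f n - x\<parallel> * \<parallel>y\<parallel>) \<longlonglongrightarrow> 0"
      using assms tendsto_mult_left_zero unfolding hconv_def by blast
  qed
  then show ?thesis by (simp add: LIM_zero_cancel)
qed

lemma hconv_ip_right:
  assumes "hconv ip f x"
  shows "(\<lambda>n. ip y (f n)) \<longlonglongrightarrow> ip y x"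
  using tendsto_cnj[OF hconv_ip_left[OF assms, of y]] by (simp add: ip_cnj[of y])

sublocale metric: Metric_space UNIV "\<lambda>x y. \<parallel>x - y\<parallel>"
  by unfold_locales (auto intro: hnorm_minus_commute hnorm_diff_triangle)

lemma hconv_iff_limitin: "hconv ip f l \<longleftrightarrow> limitin metric.mtopology f l sequentially"
  by (simp add: metric.limitin_metric_dist_null hconv_def)

lemma MCauchy_iff: "metric.MCauchy f \<longleftrightarrow> (\<forall>e>0. \<exists>K. \<forall>m\<ge>K. \<forall>n\<ge>K. \<parallel>f m - f n\<parallel> < e)"
  by (simp add: metric.MCauchy_def)

lemma hconv_if_MCauchy: "metric.MCauchy f \<Longrightarrow> \<exists>l. hconv ip f l"
  using hilbert_complete unfolding MCauchy_iff by blast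

lemma MCauchy_if_hconv: "hconv ip f l \<Longrightarrow> metric.MCauchy f"
  by (simp add: hconv_iff_limitin metric.convergent_imp_MCauchy)

lemma MCauchy_Lipschitz:
  assumes "metric.MCauchy f" and "\<And>m n. \<parallel>g m - g n\<parallel> \<le> c * \<parallel>f m - f n\<parallel>" and "c \<ge> 0"
  shows "metric.MCauchy g"
  unfolding MCauchy_iff
proof (intro allI impI)
  fix e :: real assume "e > 0"
  then obtain K where K: "\<forall>m\<ge>K. \<forall>n\<ge>K. \<parallel>f m - f n\<parallel> < e / (c + 1)"
    using assms(1) \<open>c \<ge> 0\<close> unfolding MCauchy_iff by (meson add_nonneg_pos divide_pos_pos zero_less_one)
  have "\<parallel>g m - g n\<parallel> < e" if "m \<ge> K" "n \<ge> K" for m n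
  proof -
    have "\<parallel>g m - g n\<parallel> \<le> (c + 1) * \<parallel>f m - f n\<parallel>"
      using assms(2)[of m n] by (simp add: distrib_right add_increasing2)
    also have "\<dots> < (c + 1) * (e / (c + 1))"
      using K that \<open>c \<ge> 0\<close> by (intro mult_strict_left_mono) auto
    finally show ?thesis using \<open>c \<ge> 0\<close> by simp
  qed
  then show "\<exists>K. \<forall>m\<ge>K. \<forall>n\<ge>K. \<parallel>g m - g n\<parallel> < e" by blast
qed

lemma mcomplete: metric.mcomplete
  unfolding metric.mcomplete_def MCauchy_iff hconv_iff_limitin[symmetric]
  using hilbert_complete by blast

lemma closedin_iff_hconv:
  "closedin metric.mtopology S \<longleftrightarrow> (\<forall>f x. (\<forall>n. f n \<in> S) \<and> hconv ip f x \<longrightarrow> x \<in> S)"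
  by (auto simp: metric.metric_closedin_iff_sequentially_closed hconv_iff_limitin image_subset_iff)

lemma Baire_ball:
  fixes E :: "nat \<Rightarrow> 'a set"
  assumes "\<And>x. \<exists>n. x \<in> E n"
  shows "\<exists>n x r. r > 0 \<and> metric.mball x r \<subseteq> metric.mtopology closure_of E n"
proof (rule ccontr)
  assume no_ball: "\<not> ?thesis"
  have "metric.mtopology interior_of (\<Union>n. metric.mtopology closure_of E n) = {}"
  proof (rule metric.metric_Baire_category_alt[OF mcomplete])
    fix T assume "T \<in> range (\<lambda>n. metric.mtopology closure_of E n)"
    then obtain n where T: "T = metric.mtopology closure_of E n" by blast
    have "x \<notin> metric.mtopology interior_of T" for x
    proof
      assume x: "x \<in> metric.mtopology interior_of T"
      have "openin metric.mtopology (metric.mtopology interior_of T)" by simp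
      then obtain r where "r > 0" "metric.mball x r \<subseteq> metric.mtopology interior_of T"
        using x unfolding metric.openin_mtopology by blast
      then show False
        using no_ball interior_of_subset[of metric.mtopology T] T by blast
    qed
    then show "closedin metric.mtopology T \<and> metric.mtopology interior_of T = {}"
      using T closedin_closure_of by blast
  qed simp
  moreover have "x \<in> (\<Union>n. metric.mtopology closure_of E n)" for x
  proof -
    obtain n where "x \<in> E n" using assms by blast
    moreover have "E n \<subseteq> metric.mtopology closure_of E n"
      by (rule closure_of_subset) simp
    ultimately show ?thesis by blast
  qed
  then have "(\<Union>n. metric.mtopology closure_of E n) = topspace metric.mtopology"
    by auto
  ultimately show False
    using interior_of_topspace[of metric.mtopology] by simp
qed

lemma lin_subspace_zero: "lin_subspace sm S \<Longrightarrow> 0 \<in> S"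
  unfolding lin_subspace_def by blast

lemma lin_subspace_add: "lin_subspace sm S \<Longrightarrow> x \<in> S \<Longrightarrow> y \<in> S \<Longrightarrow> x + y \<in> S"
  unfolding lin_subspace_def by blast

lemma lin_subspace_sm: "lin_subspace sm S \<Longrightarrow> x \<in> S \<Longrightarrow> sm a x \<in> S"
  unfolding lin_subspace_def by blast

lemma lin_subspace_minus: "lin_subspace sm S \<Longrightarrow> x \<in> S \<Longrightarrow> - x \<in> S"
  using lin_subspace_sm[of S x "- 1"] by (simp add: sm_minus_one)

lemma lin_subspace_diff: "lin_subspace sm S \<Longrightarrow> x \<in> S \<Longrightarrow> y \<in> S \<Longrightarrow> x - y \<in> S"
  using lin_subspace_add[of S x "- y"] lin_subspace_minus by simp

lemma lin_op_subspace: "lin_op sm D T \<Longrightarrow> lin_subspace sm D"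
  unfolding lin_op_def by blast

lemma lin_op_add: "lin_op sm D T \<Longrightarrow> x \<in> D \<Longrightarrow> y \<in> D \<Longrightarrow> T (x + y) = T x + T y"
  unfolding lin_op_def by blast

lemma lin_op_sm: "lin_op sm D T \<Longrightarrow> x \<in> D \<Longrightarrow> T (sm a x) = sm a (T x)"
  unfolding lin_op_def by blast

lemma lin_op_zero: "lin_op sm D T \<Longrightarrow> T 0 = 0"
  using lin_op_sm[of D T 0 0] lin_subspace_zero[OF lin_op_subspace] by simp

lemma lin_op_diff: "lin_op sm D T \<Longrightarrow> x \<in> D \<Longrightarrow> y \<in> D \<Longrightarrow> T (x - y) = T x - T y"
  using lin_op_add[of D T "x - y" y] lin_subspace_diff[OF lin_op_subspace] by (simp add: eq_diff_eq)

lemma lin_op_subset: "lin_op sm W T \<Longrightarrow> lin_subspace sm V \<Longrightarrow> V \<subseteq> W \<Longrightarrow> lin_op sm V T"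
  unfolding lin_op_def by blast

lemma lin_subspace_image:
  assumes S: "lin_op sm D S"
  shows "lin_subspace sm (S ` D)"
proof -
  note D = lin_op_subspace[OF S]
  have "S 0 \<in> S ` D" using lin_subspace_zero[OF D] by blast
  moreover have "S x + S y \<in> S ` D" if "x \<in> D" "y \<in> D" for x y
    using lin_op_add[OF S that] lin_subspace_add[OF D that] by (metis image_eqI)
  moreover have "sm a (S x) \<in> S ` D" if "x \<in> D" for a x
    using lin_op_sm[OF S that] lin_subspace_sm[OF D that] by (metis image_eqI)
  ultimately show ?thesis unfolding lin_subspace_def using lin_op_zero[OF S] by auto
qed

lemma inv_into_bij_betw:
  assumes "bij_betw T V UNIV"
  shows "inv_into V T f \<in> V" and "T (inv_into V T f) = f"
    and "v \<in> V \<Longrightarrow> T v = f \<Longrightarrow> inv_into V T f = v"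
  using assms by (auto simp: bij_betw_def inv_into_into f_inv_into_f inv_into_f_eq)

lemma lin_op_inv_into:
  assumes T: "lin_op sm V T" and bij: "bij_betw T V UNIV"
  shows "lin_op sm UNIV (inv_into V T)"
proof -
  note inv = inv_into_bij_betw[OF bij]
  note V = lin_op_subspace[OF T]
  have "inv_into V T (f + g) = inv_into V T f + inv_into V T g" for f g
    by (rule inv(3)) (simp_all add: inv(1,2) lin_op_add[OF T] lin_subspace_add[OF V])
  moreover have "inv_into V T (sm a f) = sm a (inv_into V T f)" for a f
    by (rule inv(3)) (simp_all add: inv(1,2) lin_op_sm[OF T] lin_subspace_sm[OF V])
  ultimately show ?thesis unfolding lin_op_def lin_subspace_def by simp
qed

section \<open>Orthogonal projection and the Riesz representation\<close>

lemma near_minimizers_close: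
  assumes S: "lin_subspace sm S" and d: "\<forall>y\<in>S. d \<le> \<parallel>x - y\<parallel>" "d \<ge> 0" "e \<ge> 0"
    and m: "m \<in> S" "\<parallel>x - m\<parallel> \<le> d + e" and m': "m' \<in> S" "\<parallel>x - m'\<parallel> \<le> d + e"
  shows "\<parallel>m - m'\<parallel>\<^sup>2 \<le> 4 * (2 * d + e) * e"
proof -
  define mid where "mid = sm (1 / 2) (m + m')"
  have "mid \<in> S"
    unfolding mid_def using S m m' lin_subspace_add lin_subspace_sm by blast
  moreover have "(x - m) + (x - m') = sm 2 (x - mid)"
    using sm_add_left[of 1 1] sm_mult[of 2 "1 / 2"]
    by (simp add: mid_def sm_diff_right algebra_simps)
  ultimately have "2 * d \<le> \<parallel>(x - m) + (x - m')\<parallel>"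
    using d(1) by (simp add: hnorm_sm)
  then have "(2 * d)\<^sup>2 \<le> \<parallel>(x - m) + (x - m')\<parallel>\<^sup>2"
    by (rule power_mono) (use d(2) in simp)
  moreover have "\<parallel>x - m\<parallel>\<^sup>2 \<le> (d + e)\<^sup>2" "\<parallel>x - m'\<parallel>\<^sup>2 \<le> (d + e)\<^sup>2"
    using m(2) m'(2) by (simp_all add: power_mono)
  moreover have "\<parallel>(x - m) + (x - m')\<parallel>\<^sup>2 + \<parallel>m - m'\<parallel>\<^sup>2 = 2 * \<parallel>x - m\<parallel>\<^sup>2 + 2 * \<parallel>x - m'\<parallel>\<^sup>2"
    using hnorm_parallelogram[of "x - m" "x - m'"] hnorm_minus_commute[of m m'] by simp
  ultimately show ?thesis
    by (simp add: power2_eq_square algebra_simps)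
qed

lemma minimizing_sequence_MCauchy:
  assumes S: "lin_subspace sm S" and d: "\<forall>y\<in>S. d \<le> \<parallel>x - y\<parallel>" "d \<ge> 0"
    and ms: "\<And>n. ms n \<in> S" "(\<lambda>n. \<parallel>x - ms n\<parallel>) \<longlonglongrightarrow> d"
  shows "metric.MCauchy ms"
  unfolding MCauchy_iff
proof (intro allI impI)
  fix r :: real assume "r > 0"
  define e where "e = min 1 (r\<^sup>2 / (8 * (2 * d + 1)))"
  have e: "e > 0" "e \<le> 1" using \<open>r > 0\<close> d(2) by (simp_all add: e_def)
  have "4 * (2 * d + 1) * e \<le> 4 * (2 * d + 1) * (r\<^sup>2 / (8 * (2 * d + 1)))"
    using d(2) by (intro mult_left_mono) (simp_all add: e_def)
  also have "\<dots> < r\<^sup>2" using d(2) \<open>r > 0\<close> by (simp add: field_simps add_pos_nonneg)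
  finally have e_small: "4 * (2 * d + 1) * e < r\<^sup>2" .
  have "\<forall>\<^sub>F n in sequentially. \<parallel>x - ms n\<parallel> < d + e"
    using order_tendstoD(2)[OF ms(2)] e(1) by simp
  then obtain K where K: "\<And>n. n \<ge> K \<Longrightarrow> \<parallel>x - ms n\<parallel> < d + e"
    by (auto simp: eventually_sequentially)
  have "\<parallel>ms m - ms n\<parallel> < r" if "m \<ge> K" "n \<ge> K" for m n
  proof -
    have "\<parallel>ms m - ms n\<parallel>\<^sup>2 \<le> 4 * (2 * d + e) * e"
      using near_minimizers_close[OF S d less_imp_le[OF e(1)] ms(1) _ ms(1)] K that by force
    also have "\<dots> \<le> 4 * (2 * d + 1) * e" using e by (simp add: mult_right_mono)
    also note e_small
    finally show ?thesis using \<open>r > 0\<close> by (simp add: power2_less_imp_less)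
  qed
  then show "\<exists>K. \<forall>m\<ge>K. \<forall>n\<ge>K. \<parallel>ms m - ms n\<parallel> < r" by blast
qed

lemma best_approximation:
  assumes S: "lin_subspace sm S" and closed: "closedin metric.mtopology S"
  shows "\<exists>m\<in>S. \<forall>y\<in>S. \<parallel>x - m\<parallel> \<le> \<parallel>x - y\<parallel>"
proof -
  define d where "d = Inf ((\<lambda>y. \<parallel>x - y\<parallel>) ` S)"
  have "bdd_below ((\<lambda>y. \<parallel>x - y\<parallel>) ` S)"
    by (rule bdd_belowI[of _ 0]) auto
  then have d_le: "\<forall>y\<in>S. d \<le> \<parallel>x - y\<parallel>"
    unfolding d_def by (auto intro: cInf_lower)
  have d_nonneg: "d \<ge> 0"
    unfolding d_def using lin_subspace_zero[OF S] by (auto intro: cInf_greatest)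
  have "\<exists>m\<in>S. \<parallel>x - m\<parallel> < d + inverse (real (Suc n))" for n
    using cInf_lessD[of "(\<lambda>y. \<parallel>x - y\<parallel>) ` S"] lin_subspace_zero[OF S] unfolding d_def by fastforce
  then obtain ms where ms: "\<And>n. ms n \<in> S" "\<And>n. \<parallel>x - ms n\<parallel> < d + inverse (real (Suc n))"
    by metis
  have "(\<lambda>n. \<parallel>x - ms n\<parallel>) \<longlonglongrightarrow> d"
  proof (rule tendsto_sandwich[of "\<lambda>n. d" _ _ "\<lambda>n. d + inverse (real (Suc n))"])
    show "(\<lambda>n. d + inverse (real (Suc n))) \<longlonglongrightarrow> d"
      using tendsto_add[OF tendsto_const LIMSEQ_inverse_real_of_nat] by simp
    show "\<forall>\<^sub>F n in sequentially. \<parallel>x - ms n\<parallel> \<le> d + inverse (real (Suc n))"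
      using ms(2) by (intro always_eventually allI less_imp_le)
  qed (use d_le ms(1) in auto)
  moreover obtain m where m: "hconv ip ms m"
    using minimizing_sequence_MCauchy[OF S d_le d_nonneg ms(1) calculation] hconv_if_MCauchy by blast
  moreover have "(\<lambda>n. \<parallel>x - ms n\<parallel>) \<longlonglongrightarrow> \<parallel>x - m\<parallel>"
    by (rule hconv_hnorm[OF hconv_diff[OF hconv_const m]])
  ultimately have "\<parallel>x - m\<parallel> = d" using LIMSEQ_unique by blast
  moreover have "m \<in> S"
    using closed ms(1) m unfolding closedin_iff_hconv by blast
  ultimately show ?thesis using d_le by force
qed

lemma best_approximation_orthogonal:
  assumes S: "lin_subspace sm S" and m: "m \<in> S" "\<forall>y\<in>S. \<parallel>x - m\<parallel> \<le> \<parallel>x - y\<parallel>" and y: "y \<in> S"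
  shows "ip y (x - m) = 0"
proof (rule ccontr)
  define w where "w = x - m"
  define \<alpha> where "\<alpha> = ip y w"
  assume "ip y (x - m) \<noteq> 0"
  then have \<alpha>: "cmod \<alpha> > 0" by (simp add: \<alpha>_def w_def)
  \<comment> \<open>moving from \<open>m\<close> towards \<open>m + t \<alpha>\<^sup>* y\<close> for small \<open>t > 0\<close> would decrease the distance\<close>
  define t :: real where "t = 1 / (\<parallel>y\<parallel>\<^sup>2 + 1)"
  have t: "t > 0" "t * \<parallel>y\<parallel>\<^sup>2 < 1"
    unfolding t_def by (simp_all add: add_pos_nonneg field_simps)
  define s where "s = complex_of_real t * cnj \<alpha>"
  have "m + sm s y \<in> S"
    using S m(1) y lin_subspace_add lin_subspace_sm by blast
  then have "\<parallel>w\<parallel> \<le> \<parallel>w - sm s y\<parallel>"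
    using m(2) unfolding w_def by (simp add: algebra_simps)
  then have "\<parallel>w\<parallel>\<^sup>2 \<le> \<parallel>w - sm s y\<parallel>\<^sup>2" by (simp add: power_mono)
  also have "\<dots> = \<parallel>w\<parallel>\<^sup>2 + (cmod s)\<^sup>2 * \<parallel>y\<parallel>\<^sup>2 - 2 * Re (ip w (sm s y))"
    by (simp add: hnorm_diff_square hnorm_sm power_mult_distrib)
  also have "ip w (sm s y) = complex_of_real t * (\<alpha> * cnj \<alpha>)"
    by (simp add: ip_sm_right s_def \<alpha>_def ip_cnj[of y w])
  also have "\<alpha> * cnj \<alpha> = complex_of_real ((cmod \<alpha>)\<^sup>2)"
    by (rule complex_norm_square[symmetric])
  also have "cmod s = t * cmod \<alpha>"
    using t by (simp add: s_def norm_mult)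
  finally have "0 \<le> (t * (cmod \<alpha>)\<^sup>2) * (t * \<parallel>y\<parallel>\<^sup>2 - 2)"
    by (simp add: power2_eq_square algebra_simps)
  moreover have "t * (cmod \<alpha>)\<^sup>2 > 0" using t \<alpha> by simp
  ultimately show False
    using t by (simp add: zero_le_mult_iff)
qed

lemma orthogonal_projection:
  assumes "lin_subspace sm S" and "closedin metric.mtopology S"
  shows "\<exists>m\<in>S. \<forall>y\<in>S. ip y (x - m) = 0"
  using best_approximation[OF assms] best_approximation_orthogonal[OF assms(1)] by blast

lemma Riesz_representation:
  fixes \<phi> :: "'a \<Rightarrow> complex"
  assumes add: "\<And>x y. \<phi> (x + y) = \<phi> x + \<phi> y"
    and sm: "\<And>a x. \<phi> (sm a x) = a * \<phi> x"
    and bounded: "\<And>x. cmod (\<phi> x) \<le> C * \<parallel>x\<parallel>"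
  shows "\<exists>b. \<forall>x. \<phi> x = ip x b"
proof (cases "\<forall>x. \<phi> x = 0")
  case True
  then show ?thesis by (intro exI[of _ 0]) simp
next
  case False
  then obtain e where e: "\<phi> e \<noteq> 0" by blast
  have \<phi>_zero: "\<phi> 0 = 0" using add[of 0 0] by simp
  have \<phi>_diff: "\<phi> (x - y) = \<phi> x - \<phi> y" for x y
    using add[of "x - y" y] by simp
  define K where "K = {x. \<phi> x = 0}"
  have "lin_subspace sm K"
    unfolding lin_subspace_def K_def using \<phi>_zero add sm by simp
  moreover have "closedin metric.mtopology K"
    unfolding closedin_iff_hconv
  proof (intro allI impI)
    fix f x assume f: "(\<forall>n. f n \<in> K) \<and> hconv ip f x"
    have "cmod (\<phi> x) \<le> C * \<parallel>f n - x\<parallel>" for n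
      using f bounded[of "x - f n"] hnorm_minus_commute[of x "f n"] by (simp add: \<phi>_diff K_def)
    moreover have "(\<lambda>n. C * \<parallel>f n - x\<parallel>) \<longlonglongrightarrow> 0"
      using f tendsto_mult_right_zero unfolding hconv_def by blast
    ultimately have "cmod (\<phi> x) \<le> 0" using LIMSEQ_le_const by blast
    then show "x \<in> K" unfolding K_def by simp
  qed
  ultimately obtain m where m: "m \<in> K" "\<forall>y\<in>K. ip y (e - m) = 0"
    using orthogonal_projection by blast
  define z where "z = e - m"
  have \<phi>z: "\<phi> z = \<phi> e" using m(1) \<phi>_diff unfolding z_def K_def by simp
  then have "z \<noteq> 0" using e \<phi>_zero by auto
  then have ip_zz: "ip z z \<noteq> 0" using ip_self_eq_0D by blast
  \<comment> \<open>\<open>z\<close> is orthogonal to \<open>ker \<phi>\<close>, and \<open>x - (\<phi> x / \<phi> z) z \<in> ker \<phi>\<close>\<close>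
  have "\<phi> x = ip x (sm (cnj (\<phi> z / ip z z)) z)" for x
  proof -
    have "\<phi> (x - sm (\<phi> x / \<phi> z) z) = 0" using \<phi>z e by (simp add: \<phi>_diff sm)
    then have "ip (x - sm (\<phi> x / \<phi> z) z) z = 0" using m(2) unfolding K_def z_def by simp
    then have "ip x z = (\<phi> x / \<phi> z) * ip z z" by (simp add: ip_diff_left ip_sm_left)
    then show ?thesis using ip_zz \<phi>z e by (simp add: ip_sm_right field_simps)
  qed
  then show ?thesis by blast
qed

section \<open>Adjoints\<close>

abbreviation adj_ker :: "'a set \<Rightarrow> ('a \<Rightarrow> 'a) \<Rightarrow> 'a set" where
  "adj_ker D T \<equiv> {w \<in> adj_dom ip D T. adj_fun ip D T w = 0}"

lemma ip_eq_on_hdense: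
  assumes "hdense ip D" and "\<forall>x\<in>D. ip x z = ip x z'"
  shows "z = z'"
proof -
  obtain f where f: "\<forall>n. f n \<in> D" "hconv ip f (z - z')"
    using assms(1) unfolding hdense_def by blast
  have "\<forall>n. ip (f n) (z - z') = 0" using f(1) assms(2) by (simp add: ip_diff_right)
  then have "(\<lambda>n. 0) \<longlonglongrightarrow> ip (z - z') (z - z')"
    using hconv_ip_left[OF f(2), of "z - z'"] by simp
  then have "ip (z - z') (z - z') = 0" using LIMSEQ_unique tendsto_const by blast
  then have "z - z' = 0" by (rule ip_self_eq_0D)
  then show ?thesis by simp
qed

lemma adjointI:
  assumes "hdense ip D" and "\<forall>x\<in>D. ip (T x) y = ip x z"
  shows "y \<in> adj_dom ip D T" and "adj_fun ip D T y = z"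
proof -
  show "y \<in> adj_dom ip D T" unfolding adj_dom_def using assms(2) by blast
  show "adj_fun ip D T y = z"
    unfolding adj_fun_def
    by (rule the_equality) (use assms ip_eq_on_hdense[OF assms(1)] in auto)
qed

lemma adjointD:
  assumes "hdense ip D" and "y \<in> adj_dom ip D T" and "x \<in> D"
  shows "ip (T x) y = ip x (adj_fun ip D T y)"
proof -
  obtain z where z: "\<forall>x\<in>D. ip (T x) y = ip x z"
    using assms(2) unfolding adj_dom_def by blast
  then show ?thesis using adjointI(2)[OF assms(1) z] assms(3) by simp
qed

lemma lin_op_adjoint:
  assumes D: "hdense ip D"
  shows "lin_op sm (adj_dom ip D T) (adj_fun ip D T)"
proof -
  let ?T' = "adj_fun ip D T"
  have zero: "\<forall>x\<in>D. ip (T x) 0 = ip x 0" by simp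
  have add: "\<forall>x\<in>D. ip (T x) (y + y') = ip x (?T' y + ?T' y')"
    if "y \<in> adj_dom ip D T" "y' \<in> adj_dom ip D T" for y y'
    using adjointD[OF D that(1)] adjointD[OF D that(2)] by (simp add: ip_add_right)
  have sm: "\<forall>x\<in>D. ip (T x) (sm a y) = ip x (sm a (?T' y))"
    if "y \<in> adj_dom ip D T" for a y
    using adjointD[OF D that] by (simp add: ip_sm_right)
  show ?thesis
    unfolding lin_op_def lin_subspace_def
    using adjointI(1)[OF D zero] adjointI[OF D add] adjointI[OF D sm] by simp
qed

lemma adjoint_extends:
  assumes "hdense ip D" and "\<forall>x\<in>D. \<forall>y\<in>D. ip (T x) y = ip x (T' y)" and "y \<in> D"
  shows "y \<in> adj_dom ip D T" and "adj_fun ip D T y = T' y"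
  using adjointI[OF assms(1), of T y "T' y"] assms(2,3) by auto

lemma adjoint_of_extension:
  assumes "hdense ip D" and "D \<subseteq> E" and "\<forall>x\<in>D. S x = T x" and "y \<in> adj_dom ip E S"
  shows "y \<in> adj_dom ip D T" and "adj_fun ip D T y = adj_fun ip E S y"
proof -
  have "hdense ip E" using assms(1,2) unfolding hdense_def by blast
  then have "\<forall>x\<in>D. ip (T x) y = ip x (adj_fun ip E S y)"
    using adjointD[OF _ assms(4)] assms(2,3) by (metis subsetD)
  then show "y \<in> adj_dom ip D T" and "adj_fun ip D T y = adj_fun ip E S y"
    using adjointI[OF assms(1)] by blast+
qed

lemma adj_dom_sum_cancel:
  assumes "y \<in> adj_dom ip D (\<lambda>x. S x + T x)" and "y \<in> adj_dom ip D T"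
  shows "y \<in> adj_dom ip D S"
proof -
  obtain z z' where "\<forall>x\<in>D. ip (S x + T x) y = ip x z" "\<forall>x\<in>D. ip (T x) y = ip x z'"
    using assms unfolding adj_dom_def by blast
  then have "\<forall>x\<in>D. ip (S x) y = ip x (z - z')"
    by (auto simp: ip_add_left ip_diff_right eq_diff_eq)
  then show ?thesis unfolding adj_dom_def by blast
qed

lemma adj_dom_bounded_symmetric:
  assumes D: "hdense ip D" and B: "lin_op sm D B"
    and bounded: "\<forall>x\<in>D. \<parallel>B x\<parallel> \<le> c * \<parallel>x\<parallel>" "c \<ge> 0"
    and symmetric: "\<forall>x\<in>D. \<forall>y\<in>D. ip (B x) y = ip x (B y)"
  shows "w \<in> adj_dom ip D B"
proof -
  obtain ws where ws: "\<forall>n. ws n \<in> D" "hconv ip ws w"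
    using D unfolding hdense_def by blast
  have "metric.MCauchy (\<lambda>n. B (ws n))"
  proof (rule MCauchy_Lipschitz[OF MCauchy_if_hconv[OF ws(2)] _ bounded(2)])
    fix m n
    have "B (ws m) - B (ws n) = B (ws m - ws n)"
      using lin_op_diff[OF B] ws(1) by simp
    then show "\<parallel>B (ws m) - B (ws n)\<parallel> \<le> c * \<parallel>ws m - ws n\<parallel>"
      using bounded(1) lin_subspace_diff[OF lin_op_subspace[OF B]] ws(1) by simp
  qed
  then obtain z where z: "hconv ip (\<lambda>n. B (ws n)) z"
    using hconv_if_MCauchy by blast
  have "ip (B x) w = ip x z" if "x \<in> D" for x
  proof -
    have "(\<lambda>n. ip (B x) (ws n)) \<longlonglongrightarrow> ip (B x) w"
      by (rule hconv_ip_right[OF ws(2)])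
    moreover have "(\<lambda>n. ip (B x) (ws n)) \<longlonglongrightarrow> ip x z"
      using hconv_ip_right[OF z, of x] symmetric that ws(1) by simp
    ultimately show ?thesis by (rule LIMSEQ_unique)
  qed
  then show ?thesis unfolding adj_dom_def by blast
qed

section \<open>The closed graph theorem\<close>

lemma hconv_geometric:
  assumes steps: "\<And>k. \<parallel>u (Suc k) - u k\<parallel> \<le> B * (1 / 2) ^ k"
  shows "\<exists>l. hconv ip u l \<and> \<parallel>l - u 0\<parallel> \<le> 2 * B"
proof -
  have tail: "\<parallel>u L - u K\<parallel> \<le> 2 * B * ((1 / 2) ^ K - (1 / 2) ^ L)" if "K \<le> L" for K L
    using that
  proof (induction L rule: dec_induct)
    case (step L)
    have "\<parallel>u (Suc L) - u K\<parallel> \<le> \<parallel>u (Suc L) - u L\<parallel> + \<parallel>u L - u K\<parallel>"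
      by (rule hnorm_diff_triangle)
    also have "\<dots> \<le> B * (1 / 2) ^ L + 2 * B * ((1 / 2) ^ K - (1 / 2) ^ L)"
      using steps[of L] step.IH by linarith
    finally show ?case by (simp add: algebra_simps)
  qed simp
  have "B \<ge> 0" using order_trans[OF hnorm_nonneg steps[of 0]] by simp
  have tail': "\<parallel>u L - u K\<parallel> \<le> 2 * B * (1 / 2) ^ K" if "K \<le> L" for K L
  proof -
    have "2 * B * ((1 / 2) ^ K - (1 / 2) ^ L) \<le> 2 * B * (1 / 2) ^ K"
      using \<open>B \<ge> 0\<close> by (intro mult_left_mono) auto
    then show ?thesis using tail[OF that] by linarith
  qed
  have "metric.MCauchy u"
    unfolding MCauchy_iff
  proof (intro allI impI)
    fix e :: real assume "e > 0"
    have "(\<lambda>K. 2 * B * (1 / 2) ^ K) \<longlonglongrightarrow> 0"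
      by (intro tendsto_mult_right_zero LIMSEQ_power_zero) simp
    then have "\<forall>\<^sub>F K in sequentially. 2 * B * (1 / 2) ^ K < e / 2"
      by (rule order_tendstoD(2)) (use \<open>e > 0\<close> in simp)
    then obtain K where K: "2 * B * (1 / 2) ^ K < e / 2"
      by (auto simp: eventually_sequentially)
    have "\<parallel>u m - u n\<parallel> < e" if "m \<ge> K" "n \<ge> K" for m n
      using hnorm_diff_triangle[where x = "u m" and y = "u K" and z = "u n"] tail'[OF that(1)] tail'[OF that(2)]
        hnorm_minus_commute[of "u K" "u n"] K by linarith
    then show "\<exists>K. \<forall>m\<ge>K. \<forall>n\<ge>K. \<parallel>u m - u n\<parallel> < e" by blast
  qed
  then obtain l where l: "hconv ip u l"
    using hconv_if_MCauchy by blast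
  have "(\<lambda>L. \<parallel>u L - u 0\<parallel>) \<longlonglongrightarrow> \<parallel>l - u 0\<parallel>"
    by (rule hconv_hnorm[OF hconv_diff[OF l hconv_const]])
  then have "\<parallel>l - u 0\<parallel> \<le> 2 * B"
    using tail'[of 0] by (intro LIMSEQ_le_const2) auto
  then show ?thesis using l by blast
qed

lemma bounded_if_halving_approximation:
  assumes A: "lin_op sm UNIV A" "closed_op ip UNIV A" and "M \<ge> 0"
    and approx: "\<And>f. \<exists>h. \<parallel>A h\<parallel> \<le> M * \<parallel>f\<parallel> \<and> \<parallel>f - h\<parallel> \<le> \<parallel>f\<parallel> / 2"
  shows "\<parallel>A f\<parallel> \<le> 2 * M * \<parallel>f\<parallel>"
proof -
  obtain H where H: "\<And>g. \<parallel>A (H g)\<parallel> \<le> M * \<parallel>g\<parallel>" "\<And>g. \<parallel>g - H g\<parallel> \<le> \<parallel>g\<parallel> / 2"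
    using approx by metis
  \<comment> \<open>\<open>F k\<close> is the remainder after \<open>k\<close> corrections, \<open>u k\<close> the accumulated approximate preimage\<close>
  define F where "F k = ((\<lambda>g. g - H g) ^^ k) f" for k
  define u where "u k = A (f - F k)" for k
  have F: "\<parallel>F k\<parallel> \<le> (1 / 2) ^ k * \<parallel>f\<parallel>" for k
  proof (induction k)
    case (Suc k)
    then show ?case using H(2)[of "F k"] by (simp add: F_def)
  qed (simp add: F_def)
  have "u (Suc k) - u k = A (H (F k))" for k
    using lin_op_diff[OF A(1), of "f - F (Suc k)" "f - F k"] by (simp add: u_def F_def)
  then have "\<parallel>u (Suc k) - u k\<parallel> \<le> M * \<parallel>f\<parallel> * (1 / 2) ^ k" for k
    using H(1)[of "F k"] F[of k] \<open>M \<ge> 0\<close>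
    by (metis mult.commute mult.left_commute mult_left_mono order_trans)
  then obtain y where y: "hconv ip u y" "\<parallel>y - u 0\<parallel> \<le> 2 * (M * \<parallel>f\<parallel>)"
    using hconv_geometric by blast
  have "hconv ip (\<lambda>k. f - F k) f"
  proof (rule hconv_by_bound)
    show "\<parallel>f - F k - f\<parallel> \<le> (1 / 2) ^ k * \<parallel>f\<parallel>" for k using F[of k] by (simp add: hnorm_minus)
  qed (intro tendsto_mult_left_zero LIMSEQ_power_zero, simp)
  then have "A f = y"
    using A(2) y(1) unfolding closed_op_def u_def by blast
  then show ?thesis
    using y(2) lin_op_zero[OF A(1)] by (simp add: u_def F_def)
qed

lemma halving_approximation:
  assumes A: "lin_op sm UNIV A" and "r > 0"
    and small: "\<And>g. \<parallel>g\<parallel> < r \<Longrightarrow> \<exists>h. \<parallel>A h\<parallel> \<le> K \<and> \<parallel>g - h\<parallel> < r / 4"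
  shows "\<exists>h. \<parallel>A h\<parallel> \<le> 2 * K / r * \<parallel>f\<parallel> \<and> \<parallel>f - h\<parallel> \<le> \<parallel>f\<parallel> / 2"
proof (cases "f = 0")
  case True
  then show ?thesis using lin_op_zero[OF A] by (intro exI[of _ 0]) simp
next
  case False
  then have f: "\<parallel>f\<parallel> > 0" by (simp add: hnorm_pos_iff)
  \<comment> \<open>rescale \<open>f\<close> into the ball of radius \<open>r\<close>, approximate there, and scale back\<close>
  define c where "c = r / (2 * \<parallel>f\<parallel>)"
  have c: "c > 0" using f \<open>r > 0\<close> by (simp add: c_def)
  have cf: "c * \<parallel>f\<parallel> = r / 2"
    using False by (simp add: c_def)
  have "\<parallel>sm (of_real c) f\<parallel> = c * \<parallel>f\<parallel>"
    using c by (simp add: hnorm_sm)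
  also note cf
  finally obtain h where h: "\<parallel>A h\<parallel> \<le> K" "\<parallel>sm (of_real c) f - h\<parallel> < r / 4"
    using small[of "sm (of_real c) f"] \<open>r > 0\<close> by auto
  define h' where "h' = sm (of_real (1 / c)) h"
  have "\<parallel>A h'\<parallel> = \<parallel>A h\<parallel> / c"
    using c by (simp add: h'_def lin_op_sm[OF A] hnorm_sm norm_divide)
  also have "\<dots> \<le> 2 * K / r * \<parallel>f\<parallel>"
    using h(1) c f \<open>r > 0\<close> by (simp add: c_def divide_right_mono field_simps)
  finally have "\<parallel>A h'\<parallel> \<le> 2 * K / r * \<parallel>f\<parallel>" .
  moreover have "\<parallel>f - h'\<parallel> \<le> \<parallel>f\<parallel> / 2"
  proof -
    have "f - h' = sm (of_real (1 / c)) (sm (of_real c) f - h)"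
      using c by (simp add: h'_def sm_diff_right sm_mult[symmetric])
    then have "\<parallel>f - h'\<parallel> = \<parallel>sm (of_real c) f - h\<parallel> / c"
      using c by (simp add: hnorm_sm norm_divide)
    also have "\<dots> \<le> (r / 4) / c"
      by (rule divide_right_mono) (use h(2) c in auto)
    also have "\<dots> = \<parallel>f\<parallel> / 2"
      using c cf by (simp add: field_simps)
    finally show ?thesis .
  qed
  ultimately show ?thesis by blast
qed

theorem closed_graph_theorem:
  assumes A: "lin_op sm UNIV A" "closed_op ip UNIV A"
  shows "\<exists>C. \<forall>f. \<parallel>A f\<parallel> \<le> C * \<parallel>f\<parallel>"
proof -
  define E where "E n = {f. \<parallel>A f\<parallel> \<le> real n}" for n :: nat
  have "\<exists>n. f \<in> E n" for f
    using real_arch_simple[of "\<parallel>A f\<parallel>"] by (simp add: E_def)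
  then obtain n x\<^sub>0 r where "r > 0" and ball: "metric.mball x\<^sub>0 r \<subseteq> metric.mtopology closure_of E n"
    using Baire_ball by blast
  have near: "\<exists>y\<in>E n. \<parallel>g - y\<parallel> < e" if "\<parallel>x\<^sub>0 - g\<parallel> < r" "e > 0" for g e
    using ball that unfolding metric.metric_closure_of by fastforce
  \<comment> \<open>\<open>g = (x\<^sub>0 + g) - x\<^sub>0\<close>, and both \<open>x\<^sub>0 + g\<close> and \<open>x\<^sub>0\<close> lie in the ball\<close>
  have "\<exists>h. \<parallel>A h\<parallel> \<le> 2 * real n \<and> \<parallel>g - h\<parallel> < r / 4" if g: "\<parallel>g\<parallel> < r" for g
  proof -
    obtain y\<^sub>1 where y\<^sub>1: "y\<^sub>1 \<in> E n" "\<parallel>x\<^sub>0 + g - y\<^sub>1\<parallel> < r / 8"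
      using near[of "x\<^sub>0 + g" "r / 8"] g \<open>r > 0\<close> by (auto simp: hnorm_minus)
    obtain y\<^sub>2 where y\<^sub>2: "y\<^sub>2 \<in> E n" "\<parallel>x\<^sub>0 - y\<^sub>2\<parallel> < r / 8"
      using near[of x\<^sub>0 "r / 8"] \<open>r > 0\<close> by auto
    have "\<parallel>A (y\<^sub>1 - y\<^sub>2)\<parallel> \<le> \<parallel>A y\<^sub>1\<parallel> + \<parallel>A y\<^sub>2\<parallel>"
      using lin_op_diff[OF A(1)] hnorm_diff_le by simp
    also have "\<dots> \<le> 2 * real n" using y\<^sub>1(1) y\<^sub>2(1) by (simp add: E_def)
    finally have "\<parallel>A (y\<^sub>1 - y\<^sub>2)\<parallel> \<le> 2 * real n" .
    moreover have "\<parallel>g - (y\<^sub>1 - y\<^sub>2)\<parallel> < r / 4"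
      using hnorm_diff_le[of "x\<^sub>0 + g - y\<^sub>1" "x\<^sub>0 - y\<^sub>2"] y\<^sub>1(2) y\<^sub>2(2) by (simp add: algebra_simps)
    ultimately show ?thesis by blast
  qed
  then have "\<exists>h. \<parallel>A h\<parallel> \<le> 2 * (2 * real n) / r * \<parallel>f\<parallel> \<and> \<parallel>f - h\<parallel> \<le> \<parallel>f\<parallel> / 2" for f
    using halving_approximation[OF A(1) \<open>r > 0\<close>] by blast
  moreover have "2 * (2 * real n) / r \<ge> 0" using \<open>r > 0\<close> by simp
  ultimately show ?thesis
    using bounded_if_halving_approximation[OF A] by blast
qed

lemma closed_op_inv_into:
  assumes closed: "closed_op ip V T" and bij: "bij_betw T V UNIV"
  shows "closed_op ip UNIV (inv_into V T)"
  unfolding closed_op_def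
proof (intro allI impI)
  note inv = inv_into_bij_betw[OF bij]
  fix f x y assume conv: "(\<forall>n. f n \<in> UNIV) \<and> hconv ip f x \<and> hconv ip (\<lambda>n. inv_into V T (f n)) y"
  then have "hconv ip (\<lambda>n. T (inv_into V T (f n))) x" by (simp add: inv(2))
  then have "y \<in> V \<and> T y = x"
    using closed[unfolded closed_op_def, rule_format, of "\<lambda>n. inv_into V T (f n)" y x] conv inv(1)
    by blast
  then show "x \<in> UNIV \<and> inv_into V T x = y" using inv(3) by blast
qed

corollary bounded_inverse:
  assumes "lin_op sm V T" and "closed_op ip V T" and "bij_betw T V UNIV"
  shows "\<exists>C. \<forall>f. \<parallel>inv_into V T f\<parallel> \<le> C * \<parallel>f\<parallel>"
  using closed_graph_theorem[OF lin_op_inv_into[OF assms(1,3)] closed_op_inv_into[OF assms(2,3)]] .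

lemma adjoint_bijective:
  assumes V: "hdense ip V" and T: "lin_op sm V T" "closed_op ip V T" "bij_betw T V UNIV"
  shows "bij_betw (adj_fun ip V T) (adj_dom ip V T) UNIV"
proof -
  let ?A = "inv_into V T" and ?T' = "adj_fun ip V T"
  note inv = inv_into_bij_betw[OF T(3)]
  have "inj_on ?T' (adj_dom ip V T)"
  proof (rule inj_onI)
    fix b b' assume b: "b \<in> adj_dom ip V T" "b' \<in> adj_dom ip V T" "?T' b = ?T' b'"
    have "ip g b = ip g b'" for g
      using adjointD[OF V b(1) inv(1)] adjointD[OF V b(2) inv(1)] b(3) inv(2) by metis
    moreover have "hdense ip UNIV" unfolding hdense_def using hconv_const by blast
    ultimately show "b = b'" using ip_eq_on_hdense by blast
  qed
  moreover have "h \<in> ?T' ` adj_dom ip V T" for h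
  proof -
    obtain C where C: "\<forall>f. \<parallel>?A f\<parallel> \<le> C * \<parallel>f\<parallel>"
      using bounded_inverse[OF T] by blast
    \<comment> \<open>\<open>T'\<^sup>-\<^sup>1 h\<close> is the Riesz representative of the bounded functional \<open>f \<mapsto> \<langle>T\<^sup>-\<^sup>1 f, h\<rangle>\<close>\<close>
    have "\<exists>b. \<forall>f. ip (?A f) h = ip f b"
    proof (rule Riesz_representation)
      note A = lin_op_inv_into[OF T(1,3)]
      show "ip (?A (f + g)) h = ip (?A f) h + ip (?A g) h" for f g
        by (simp add: lin_op_add[OF A] ip_add_left)
      show "ip (?A (sm a f)) h = a * ip (?A f) h" for a f
        by (simp add: lin_op_sm[OF A] ip_sm_left)
      show "cmod (ip (?A f) h) \<le> (C * \<parallel>h\<parallel>) * \<parallel>f\<parallel>" for f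
        using ip_Cauchy_Schwarz[of "?A f" h] mult_right_mono[OF C[rule_format, of f] hnorm_nonneg[of h]]
        by (simp add: algebra_simps)
    qed
    then obtain b where "\<forall>f. ip (?A f) h = ip f b" by blast
    then have "\<forall>v\<in>V. ip (T v) b = ip v h"
      using inv(3) by metis
    then show ?thesis using adjointI[OF V] by (metis image_eqI)
  qed
  ultimately show ?thesis by (auto simp: bij_betw_def)
qed

section \<open>Closed operators that are bounded below\<close>

lemma closedin_range_coercive:
  assumes S: "lin_op sm D S" "closed_op ip D S" and \<mu>: "\<mu> > 0" "\<forall>x\<in>D. \<mu> * \<parallel>x\<parallel> \<le> \<parallel>S x\<parallel>"
  shows "closedin metric.mtopology (S ` D)"
  unfolding closedin_iff_hconv
proof (intro allI impI)
  fix f g assume f: "(\<forall>n. f n \<in> S ` D) \<and> hconv ip f g"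
  then have "\<forall>n. \<exists>x. x \<in> D \<and> S x = f n" by (metis imageE)
  from choice[OF this] obtain xs where "\<forall>n. xs n \<in> D \<and> S (xs n) = f n" ..
  then have xs: "\<And>n. xs n \<in> D" "\<And>n. S (xs n) = f n" by simp_all
  have bound: "\<parallel>xs m - xs n\<parallel> \<le> 1 / \<mu> * \<parallel>f m - f n\<parallel>" for m n
  proof -
    have "\<mu> * \<parallel>xs m - xs n\<parallel> \<le> \<parallel>S (xs m - xs n)\<parallel>"
      using \<mu>(2) lin_subspace_diff[OF lin_op_subspace[OF S(1)] xs(1) xs(1)] by blast
    also have "S (xs m - xs n) = f m - f n" using lin_op_diff[OF S(1) xs(1) xs(1)] xs(2) by simp
    finally show ?thesis using \<mu>(1) by (simp add: field_simps)
  qed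
  have "metric.MCauchy xs"
    using MCauchy_Lipschitz[OF MCauchy_if_hconv bound] f \<mu>(1) by auto
  then obtain x where "hconv ip xs x" using hconv_if_MCauchy by blast
  then have "x \<in> D \<and> S x = g"
    using S(2)[unfolded closed_op_def, rule_format, of xs x g] f xs by simp
  then show "g \<in> S ` D" by blast
qed

lemma range_orthogonal_decomposition:
  assumes D: "hdense ip D" and S: "lin_op sm D S" "closed_op ip D S"
    and \<mu>: "\<mu> > 0" "\<forall>x\<in>D. \<mu> * \<parallel>x\<parallel> \<le> \<parallel>S x\<parallel>"
  shows "\<exists>a\<in>D. \<exists>k\<in>adj_ker D S. g = S a + k"
proof -
  obtain m where m: "m \<in> S ` D" "\<forall>y\<in>S ` D. ip y (g - m) = 0"
    using orthogonal_projection[OF lin_subspace_image[OF S(1)] closedin_range_coercive[OF S \<mu>]] by blast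
  then obtain a where a: "a \<in> D" "m = S a" by blast
  have "\<forall>x\<in>D. ip (S x) (g - m) = ip x 0" using m(2) by simp
  from adjointI[OF D this] have "g - m \<in> adj_ker D S" by simp
  then show ?thesis using a by force
qed

context
  fixes W\<^sub>0 W D :: "'a set" and S\<^sub>0 S\<^sub>1 R :: "'a \<Rightarrow> 'a" and \<mu> :: real
  assumes W\<^sub>0: "hdense ip W\<^sub>0" and S\<^sub>0: "lin_op sm W\<^sub>0 S\<^sub>0" "closed_op ip W\<^sub>0 S\<^sub>0"
    and coercive: "\<mu> > 0" "\<forall>x\<in>W\<^sub>0. \<mu> * \<parallel>x\<parallel> \<le> \<parallel>S\<^sub>0 x\<parallel>"
    and S\<^sub>1: "lin_op sm W S\<^sub>1" "W\<^sub>0 \<subseteq> W" "\<forall>x\<in>W\<^sub>0. S\<^sub>1 x = S\<^sub>0 x"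
    and R: "lin_subspace sm D" "D \<subseteq> W" "\<forall>v\<in>D. S\<^sub>1 v = R v" "bij_betw R D UNIV"
begin

lemma realisation_decomposition_exists:
  assumes u: "u \<in> W"
  shows "\<exists>a b c. u = a + b + c \<and> a \<in> W\<^sub>0 \<and> b \<in> D \<and> R b \<in> adj_ker W\<^sub>0 S\<^sub>0 \<and> c \<in> W \<and> S\<^sub>1 c = 0"
proof -
  note W = lin_op_subspace[OF S\<^sub>1(1)]
  note inv = inv_into_bij_betw[OF R(4)]
  obtain a k where a: "a \<in> W\<^sub>0" "k \<in> adj_ker W\<^sub>0 S\<^sub>0" "S\<^sub>1 u = S\<^sub>0 a + k"
    using range_orthogonal_decomposition[OF W\<^sub>0 S\<^sub>0 coercive, of "S\<^sub>1 u"] by auto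
  define b where "b = inv_into D R k"
  have b: "b \<in> D" "R b = k" unfolding b_def using inv by simp_all
  have ab: "a \<in> W" "b \<in> W" using a(1) b(1) S\<^sub>1(2) R(2) by blast+
  then have "S\<^sub>1 (u - a - b) = S\<^sub>1 u - S\<^sub>1 a - S\<^sub>1 b"
    using lin_op_diff[OF S\<^sub>1(1)] lin_subspace_diff[OF W] u by simp
  also have "\<dots> = 0" using a b S\<^sub>1(3) R(3) by simp
  finally have "S\<^sub>1 (u - a - b) = 0" .
  moreover have "u - a - b \<in> W" using lin_subspace_diff[OF W] u ab by simp
  ultimately show ?thesis using a b by (intro exI[of _ a] exI[of _ b] exI[of _ "u - a - b"]) auto
qed

lemma realisation_decomposition_unique:
  assumes abc: "a \<in> W\<^sub>0" "b \<in> D" "R b \<in> adj_ker W\<^sub>0 S\<^sub>0" "c \<in> W" "S\<^sub>1 c = 0" "a + b + c = 0"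
  shows "a = 0 \<and> b = 0 \<and> c = 0"
proof -
  note W = lin_op_subspace[OF S\<^sub>1(1)]
  have ab: "a \<in> W" "b \<in> W" using abc(1,2) S\<^sub>1(2) R(2) by blast+
  have "S\<^sub>1 (a + b + c) = S\<^sub>1 a + S\<^sub>1 b + S\<^sub>1 c"
    using lin_op_add[OF S\<^sub>1(1)] lin_subspace_add[OF W] ab abc(4) by simp
  then have "S\<^sub>0 a + R b = 0"
    using abc S\<^sub>1(3) R(3) lin_op_zero[OF S\<^sub>1(1)] by simp
  then have Rb: "R b = - S\<^sub>0 a" by (simp add: add_eq_0_iff)
  have "ip (S\<^sub>0 a) (R b) = 0"
    using adjointD[OF W\<^sub>0 _ abc(1)] abc(3) by simp
  then have "ip (S\<^sub>0 a) (S\<^sub>0 a) = 0" by (simp add: Rb ip_minus_right)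
  then have S\<^sub>0a: "S\<^sub>0 a = 0" by (rule ip_self_eq_0D)
  have "\<mu> * \<parallel>a\<parallel> \<le> \<parallel>S\<^sub>0 a\<parallel>" using coercive(2) abc(1) by blast
  then have "\<parallel>a\<parallel> \<le> 0" using coercive(1) S\<^sub>0a by (simp add: mult_le_0_iff)
  then have a0: "a = 0" using hnorm_nonneg[of a] by simp
  have "R 0 = 0"
    using R(3) lin_subspace_zero[OF R(1)] lin_op_zero[OF S\<^sub>1(1)] by metis
  then have "R b = R 0" using Rb S\<^sub>0a by simp
  then have "b = 0"
    using R(4) abc(2) lin_subspace_zero[OF R(1)] unfolding bij_betw_def by (blast dest: inj_onD)
  then show ?thesis using a0 abc(6) by simp
qed

lemma direct_sum3_realisation:
  "direct_sum3 W W\<^sub>0 {v \<in> D. R v \<in> adj_ker W\<^sub>0 S\<^sub>0} {w \<in> W. S\<^sub>1 w = 0}"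
proof -
  have "a + b + c \<in> W" if "a \<in> W\<^sub>0" "b \<in> D" "c \<in> W" for a b c
    using that S\<^sub>1(2) R(2) lin_subspace_add[OF lin_op_subspace[OF S\<^sub>1(1)]] by blast
  then show ?thesis
    unfolding direct_sum3_def
    using realisation_decomposition_exists realisation_decomposition_unique
    by (intro conjI set_eqI iffI) blast+
qed

end

section \<open>Friedrichs pairs\<close>

lemma friedrichs_pair_swap:
  assumes "friedrichs_pair sm ip D T T'"
  shows "friedrichs_pair sm ip D T' T"
proof -
  obtain c \<mu> where pair: "lin_op sm D T" "lin_op sm D T'" "hdense ip D"
    "\<forall>x\<in>D. \<forall>y\<in>D. ip (T x) y = ip x (T' y)"
    "c > 0" "\<forall>x\<in>D. \<parallel>T x + T' x\<parallel> \<le> c * \<parallel>x\<parallel>"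
    "\<mu> > 0" "\<forall>x\<in>D. Re (ip (T x + T' x) x) \<ge> 2 * \<mu> * \<parallel>x\<parallel>\<^sup>2"
    using assms unfolding friedrichs_pair_def by blast
  have "ip (T' x) y = ip x (T y)" if "x \<in> D" "y \<in> D" for x y
  proof -
    have "ip (T' x) y = cnj (ip y (T' x))" by (rule ip_cnj)
    also have "\<dots> = cnj (ip (T y) x)" using pair(4) that by simp
    also have "\<dots> = ip x (T y)" by (rule ip_cnj[symmetric])
    finally show ?thesis .
  qed
  moreover have "\<exists>c>0. \<forall>x\<in>D. \<parallel>T' x + T x\<parallel> \<le> c * \<parallel>x\<parallel>"
    using pair(5,6) by (auto simp: add.commute)
  moreover have "\<exists>\<mu>>0. \<forall>x\<in>D. Re (ip (T' x + T x) x) \<ge> 2 * \<mu> * \<parallel>x\<parallel>\<^sup>2"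
    using pair(7,8) by (auto simp: add.commute)
  ultimately show ?thesis
    unfolding friedrichs_pair_def using pair(1-3) by blast
qed

lemma closed_friedrichs_pair_swap:
  "closed_friedrichs_pair sm ip D T T' \<Longrightarrow> closed_friedrichs_pair sm ip D T' T"
  using friedrichs_pair_swap unfolding closed_friedrichs_pair_def by blast

lemma friedrichs_pair_adjoint_extends:
  assumes "friedrichs_pair sm ip D T T'"
  shows "D \<subseteq> adj_dom ip D T'" and "\<forall>x\<in>D. adj_fun ip D T' x = T x"
proof -
  have "hdense ip D" and "\<forall>x\<in>D. \<forall>y\<in>D. ip (T' x) y = ip x (T y)"
    using friedrichs_pair_swap[OF assms] unfolding friedrichs_pair_def by blast+
  from adjoint_extends[OF this]
  show "D \<subseteq> adj_dom ip D T'" and "\<forall>x\<in>D. adj_fun ip D T' x = T x" by blast+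
qed

lemma friedrichs_pair_coercive:
  assumes "friedrichs_pair sm ip D T T'"
  obtains \<mu> where "\<mu> > 0" and "\<forall>x\<in>D. \<mu> * \<parallel>x\<parallel> \<le> \<parallel>T x\<parallel>"
proof -
  obtain \<mu> where \<mu>: "\<mu> > 0" "\<forall>x\<in>D. Re (ip (T x + T' x) x) \<ge> 2 * \<mu> * \<parallel>x\<parallel>\<^sup>2"
    using assms unfolding friedrichs_pair_def by blast
  have "\<mu> * \<parallel>x\<parallel> \<le> \<parallel>T x\<parallel>" if x: "x \<in> D" for x
  proof -
    have "ip (T x) x = ip x (T' x)" using assms x unfolding friedrichs_pair_def by blast
    then have "Re (ip (T' x) x) = Re (ip (T x) x)" using ip_cnj[of x "T' x"] by simp
    moreover have "2 * \<mu> * \<parallel>x\<parallel>\<^sup>2 \<le> Re (ip (T x) x) + Re (ip (T' x) x)"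
      using \<mu>(2) x by (simp add: ip_add_left)
    ultimately have "\<mu> * \<parallel>x\<parallel>\<^sup>2 \<le> Re (ip (T x) x)" by simp
    also have "\<dots> \<le> \<parallel>T x\<parallel> * \<parallel>x\<parallel>"
      using complex_Re_le_cmod ip_Cauchy_Schwarz order_trans by blast
    finally show ?thesis
      using \<mu>(1) by (cases "x = 0") (simp_all add: power2_eq_square hnorm_pos_iff)
  qed
  then show ?thesis using that \<mu>(1) by blast
qed

lemma friedrichs_pair_adj_dom_subset:
  assumes pair: "friedrichs_pair sm ip D T T'"
  shows "adj_dom ip D T' \<subseteq> adj_dom ip D T"
proof
  fix w assume w: "w \<in> adj_dom ip D T'"
  have D: "hdense ip D" and lin: "lin_op sm D T" "lin_op sm D T'"
    and sym: "\<forall>x\<in>D. \<forall>y\<in>D. ip (T x) y = ip x (T' y)"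
    using pair unfolding friedrichs_pair_def by blast+
  have sym': "\<forall>x\<in>D. \<forall>y\<in>D. ip (T' x) y = ip x (T y)"
    using friedrichs_pair_swap[OF pair] unfolding friedrichs_pair_def by blast
  obtain c where c: "c > 0" "\<forall>x\<in>D. \<parallel>T x + T' x\<parallel> \<le> c * \<parallel>x\<parallel>"
    using pair unfolding friedrichs_pair_def by blast
  \<comment> \<open>by (T2) the symmetric operator \<open>T + T'\<close> is bounded, so its adjoint is everywhere defined\<close>
  have "lin_op sm D (\<lambda>x. T x + T' x)"
    using lin unfolding lin_op_def by (simp add: sm_add_right algebra_simps)
  moreover have "\<forall>x\<in>D. \<forall>y\<in>D. ip (T x + T' x) y = ip x (T y + T' y)"
    using sym sym' by (simp add: ip_add_left ip_add_right)
  ultimately have "w \<in> adj_dom ip D (\<lambda>x. T x + T' x)"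
    using adj_dom_bounded_symmetric[OF D _ c(2)] c(1) by simp
  then show "w \<in> adj_dom ip D T" using adj_dom_sum_cancel w by blast
qed

lemma friedrichs_pair_adj_dom_eq:
  "friedrichs_pair sm ip D T T' \<Longrightarrow> adj_dom ip D T = adj_dom ip D T'"
  using friedrichs_pair_adj_dom_subset friedrichs_pair_swap by blast

lemma adjoint_of_realisation:
  assumes pair: "friedrichs_pair sm ip W\<^sub>0 T\<^sub>0 T\<^sub>0'"
    and V: "W\<^sub>0 \<subseteq> V" "V \<subseteq> adj_dom ip W\<^sub>0 T\<^sub>0'" "lin_subspace sm V"
    and closed: "closed_op ip V (adj_fun ip W\<^sub>0 T\<^sub>0')" and bij: "bij_betw (adj_fun ip W\<^sub>0 T\<^sub>0') V UNIV"
  shows "lin_subspace sm (adj_dom ip V (adj_fun ip W\<^sub>0 T\<^sub>0'))"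
    and "adj_dom ip V (adj_fun ip W\<^sub>0 T\<^sub>0') \<subseteq> adj_dom ip W\<^sub>0 T\<^sub>0"
    and "\<forall>v\<in>adj_dom ip V (adj_fun ip W\<^sub>0 T\<^sub>0'). adj_fun ip W\<^sub>0 T\<^sub>0 v = adj_fun ip V (adj_fun ip W\<^sub>0 T\<^sub>0') v"
    and "bij_betw (adj_fun ip V (adj_fun ip W\<^sub>0 T\<^sub>0')) (adj_dom ip V (adj_fun ip W\<^sub>0 T\<^sub>0')) UNIV"
proof -
  have W\<^sub>0: "hdense ip W\<^sub>0" using pair unfolding friedrichs_pair_def by blast
  then have V_dense: "hdense ip V" using V(1) unfolding hdense_def by blast
  show "adj_dom ip V (adj_fun ip W\<^sub>0 T\<^sub>0') \<subseteq> adj_dom ip W\<^sub>0 T\<^sub>0"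
    and "\<forall>v\<in>adj_dom ip V (adj_fun ip W\<^sub>0 T\<^sub>0'). adj_fun ip W\<^sub>0 T\<^sub>0 v = adj_fun ip V (adj_fun ip W\<^sub>0 T\<^sub>0') v"
    using adjoint_of_extension[OF W\<^sub>0 V(1) friedrichs_pair_adjoint_extends(2)[OF pair]] by blast+
  show "lin_subspace sm (adj_dom ip V (adj_fun ip W\<^sub>0 T\<^sub>0'))"
    by (rule lin_op_subspace[OF lin_op_adjoint[OF V_dense]])
  show "bij_betw (adj_fun ip V (adj_fun ip W\<^sub>0 T\<^sub>0')) (adj_dom ip V (adj_fun ip W\<^sub>0 T\<^sub>0')) UNIV"
    by (rule adjoint_bijective[OF V_dense lin_op_subset[OF lin_op_adjoint[OF W\<^sub>0] V(3,2)] closed bij])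
qed

lemma friedrichs_realisation_direct_sum:
  assumes pair: "closed_friedrichs_pair sm ip W\<^sub>0 T\<^sub>0 T\<^sub>0'"
    and R: "lin_subspace sm V" "V \<subseteq> adj_dom ip W\<^sub>0 T\<^sub>0'" "\<forall>v\<in>V. adj_fun ip W\<^sub>0 T\<^sub>0' v = R v"
      "bij_betw R V UNIV"
  shows "direct_sum3 (adj_dom ip W\<^sub>0 T\<^sub>0') W\<^sub>0 {v \<in> V. R v \<in> adj_ker W\<^sub>0 T\<^sub>0} (adj_ker W\<^sub>0 T\<^sub>0')"
proof -
  have fp: "friedrichs_pair sm ip W\<^sub>0 T\<^sub>0 T\<^sub>0'" and closed: "closed_op ip W\<^sub>0 T\<^sub>0"
    using pair unfolding closed_friedrichs_pair_def by blast+
  then have W\<^sub>0: "hdense ip W\<^sub>0" and T\<^sub>0: "lin_op sm W\<^sub>0 T\<^sub>0"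
    unfolding friedrichs_pair_def by blast+
  obtain \<mu> where "\<mu> > 0" "\<forall>x\<in>W\<^sub>0. \<mu> * \<parallel>x\<parallel> \<le> \<parallel>T\<^sub>0 x\<parallel>"
    using friedrichs_pair_coercive[OF fp] by blast
  then show ?thesis
    by (rule direct_sum3_realisation[OF W\<^sub>0 T\<^sub>0 closed _ _ lin_op_adjoint[OF W\<^sub>0]
          friedrichs_pair_adjoint_extends[OF fp] R])
qed

end

theorem lemma3p6:
  fixes sm :: "complex \<Rightarrow> 'a::ab_group_add \<Rightarrow> 'a"
    and ip :: "'a \<Rightarrow> 'a \<Rightarrow> complex"
    and W\<^sub>0 V :: "'a set" and T\<^sub>0 T\<^sub>0' :: "'a \<Rightarrow> 'a"
  assumes H: "complex_hilbert_space sm ip"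
    and pair: "closed_friedrichs_pair sm ip W\<^sub>0 T\<^sub>0 T\<^sub>0'"
    and W_def: "W = adj_dom ip W\<^sub>0 T\<^sub>0'"
    and T1_def: "T\<^sub>1 = adj_fun ip W\<^sub>0 T\<^sub>0'"
    and T1'_def: "T\<^sub>1' = adj_fun ip W\<^sub>0 T\<^sub>0"
    and V: "W\<^sub>0 \<subseteq> V" "V \<subseteq> W" "lin_subspace sm V"
    and closed_r: "closed_op ip V T\<^sub>1"
    and bij_r: "bij_betw T\<^sub>1 V UNIV"
  shows "direct_sum3 W W\<^sub>0 {v \<in> V. T\<^sub>1 v \<in> {w \<in> adj_dom ip W\<^sub>0 T\<^sub>0. T\<^sub>1' w = 0}} {w \<in> W. T\<^sub>1 w = 0}
       \<and> direct_sum3 W W\<^sub>0 {u \<in> adj_dom ip V T\<^sub>1. adj_fun ip V T\<^sub>1 u \<in> {w \<in> W. T\<^sub>1 w = 0}}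
                          {w \<in> adj_dom ip W\<^sub>0 T\<^sub>0. T\<^sub>1' w = 0}"
proof -
  interpret hilbert_space sm ip by (rule hilbert_space.intro[OF H])
  have fp: "friedrichs_pair sm ip W\<^sub>0 T\<^sub>0 T\<^sub>0'"
    using pair unfolding closed_friedrichs_pair_def by blast
  have "direct_sum3 W W\<^sub>0 {v \<in> V. T\<^sub>1 v \<in> {w \<in> adj_dom ip W\<^sub>0 T\<^sub>0. T\<^sub>1' w = 0}} {w \<in> W. T\<^sub>1 w = 0}"
    unfolding W_def T1_def T1'_def
    by (rule friedrichs_realisation_direct_sum[OF pair V(3)])
      (use V(2) bij_r in \<open>simp_all add: W_def T1_def\<close>)
  moreover have "direct_sum3 (adj_dom ip W\<^sub>0 T\<^sub>0) W\<^sub>0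
      {u \<in> adj_dom ip V T\<^sub>1. adj_fun ip V T\<^sub>1 u \<in> {w \<in> W. T\<^sub>1 w = 0}}
      {w \<in> adj_dom ip W\<^sub>0 T\<^sub>0. T\<^sub>1' w = 0}"
    unfolding W_def T1_def T1'_def
    by (rule friedrichs_realisation_direct_sum[OF closed_friedrichs_pair_swap[OF pair]
          adjoint_of_realisation[OF fp V[unfolded W_def] closed_r[unfolded T1_def] bij_r[unfolded T1_def]]])
  moreover have "adj_dom ip W\<^sub>0 T\<^sub>0 = W"
    using friedrichs_pair_adj_dom_eq[OF fp] W_def by simp
  ultimately show ?thesis by simp
qed

end
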